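(* Fix $2\le d\le7$. Let $w$ be a good sequence of weights normalized to be a probability distribution. There exists $c\in(0,1)$ such that $\psi^{(k)}(\mathsf R(w))$ belongs to $\mathcal{S}_{0,1,c}$ for all $k$ large enough, and $\psi^{(k)}(\mathsf R(w))$ converges pointwise as $k\to\infty$.
   Context: A sequence $w=(w(i))_{i\in\mathbb{Z}}\in[0,\infty)^{\mathbb{Z}}$ is good if $w(i)=w(-i)$ for all $i$, $w(0)>0$, and there exist an integer $k\ge0$ and $c\in[0,1)$ with $w(i)=w(i+1)$ for $0\le i<k$ and $w(i+1)\le c\,w(i)$ for $i\ge k$. For a probability distribution $z$ on $\mathbb{Z}$ set $A(z)_i=(z_{i-1}+z_i+z_{i+1})^d$, $F(z)=A(z)/\sum_iA(z)_i$. $\mathcal{E}$ is the set of symmetric probability distributions on $\mathbb{Z}$ whose support is an interval or all of $\mathbb{Z}$ (a normalized good $w$ lies in $\mathcal{E}$). $\mathsf R\colon\mathcal{E}\to[0,\infty)^{\{1,2,\dots\}}$, $\mathsf R(z)_i=z_i/z_{i-1}$ if $z_{i-1}\ne0$ and $0$ otherwise; $\mathsf R$ is injective on $\mathcal{E}$, $\mathcal{R}:=\mathsf R(\mathcal{E})$, $\psi:=\mathsf R\circ F\circ\mathsf R^{-1}\colon\mathcal{R}\to\mathcal{R}$, i.e. $\psi(x)_1=\big(\frac{1+x_1+x_1x_2}{1+2x_1}\big)^d$ and $\psi(x)_n=x_{n-1}^d\big(\frac{1+x_n+x_nx_{n+1}}{1+x_{n-1}+x_{n-1}x_n}\big)^d$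 for $n\ge2$. $\psi^{(k)}$ is the $k$-fold iterate. For reals $a,b,c$, $\mathcal{S}_{a,b,c}:=\{x\in\mathcal{R}: a\le x_1\le b,\ 0\le x_n\le c\ \forall n\ge2\}$. *)

theory Defs
  imports "HOL-Analysis.Analysis"
begin

definition good :: "(int \<Rightarrow> real) \<Rightarrow> bool" where
  "good w \<longleftrightarrow> (\<forall>i. w i \<ge> 0) \<and> (\<forall>i. w i = w (-i)) \<and> w 0 > 0 \<and>
     (\<exists>k::int. \<exists>c::real. k \<ge> 0 \<and> 0 \<le> c \<and> c < 1 \<and>
        (\<forall>i. 0 \<le> i \<and> i < k \<longrightarrow> w i = w (i + 1)) \<and>
        (\<forall>i. i \<ge> k \<longrightarrow> w (i + 1) \<le> c * w i))"

definition prob_dist :: "(int \<Rightarrow> real) \<Rightarrow> bool" where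
  "prob_dist z \<longleftrightarrow> (\<forall>i. z i \<ge> 0) \<and> (z has_sum 1) UNIV"

definition Eset :: "(int \<Rightarrow> real) set" where
  "Eset = {z. prob_dist z \<and> (\<forall>i. z i = z (-i)) \<and>
              (\<forall>a b c. a \<le> c \<and> c \<le> b \<and> z a \<noteq> 0 \<and> z b \<noteq> 0 \<longrightarrow> z c \<noteq> 0)}"

text \<open>The ratio map R; sequences indexed by positive naturals, index 0 is a dummy set to 0.\<close>
definition Rmap :: "(int \<Rightarrow> real) \<Rightarrow> (nat \<Rightarrow> real)" where
  "Rmap z n = (if n = 0 then 0
               else if z (int n - 1) \<noteq> 0 then z (int n) / z (int n - 1) else 0)"

definition Rset :: "(nat \<Rightarrow> real) set" where
  "Rset = Rmap ` Eset"

definition psi :: "nat \<Rightarrow> (nat \<Rightarrow> real) \<Rightarrow> (nat \<Rightarrow> real)" where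
  "psi d x n = (if n = 0 then 0
     else if n = 1 then ((1 + x 1 + x 1 * x 2) / (1 + 2 * x 1)) ^ d
     else x (n - 1) ^ d *
          ((1 + x n + x n * x (n + 1)) / (1 + x (n - 1) + x (n - 1) * x n)) ^ d)"

definition Sset :: "real \<Rightarrow> real \<Rightarrow> real \<Rightarrow> (nat \<Rightarrow> real) set" where
  "Sset a b c = {x \<in> Rset. a \<le> x 1 \<and> x 1 \<le> b \<and> (\<forall>n\<ge>2. 0 \<le> x n \<and> x n \<le> c)}"

end

theory Submission
  imports Defs
begin

text \<open>
  Write \<open>psi d x 1 = psi_head (x 1) (x 2) ^ d\<close> and
  \<open>psi d x n = psi_inner (x (n - 1)) (x n) (x (n + 1)) ^ d\<close>; both functions are monotone on
  the relevant ranges. For a good \<open>w\<close> the ratios \<open>Rmap w n\<close> lie in \<open>[0, 1]\<close> and are at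
  most some \<open>t < 1\<close> from some index on. Since \<open>psi_inner 1 1 t < 1\<close>, each application of
  \<open>psi d\<close> moves that index one step to the left; once it has reached 2, the gap \<open>1 - t\<close>
  grows by the factor \<open>6/5\<close> per step until \<open>t = 9/10\<close>. From then on the iterates lie in
  \<open>Sset 0 1 (9/10)\<close>, membership in \<open>Rset\<close> being witnessed by the normalised even extension of
  the partial products of the ratios.

  For convergence, a finite chain of rational boxes, each mapped into the next by \<open>psi d\<close>, leads
  from the box \<open>[0, 1] \<times> [0, 9/10] \<times> [0, 9/10] \<times> \<dots>\<close> to a box that \<open>psi d\<close> maps into itself
  and on which it contracts a weighted sup-distance, so the increments of the orbit decay
  geometrically. The boxes are verified by exact rational arithmetic, separately for each
  \<open>2 \<le> d \<le> 7\<close>; this is where the bound on \<open>d\<close> enters.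
\<close>

section \<open>The coordinate functions of \<psi>\<close>

definition psi_head :: "real \<Rightarrow> real \<Rightarrow> real" where
  "psi_head a b = (1 + a + a * b) / (1 + 2 * a)"

definition psi_inner :: "real \<Rightarrow> real \<Rightarrow> real \<Rightarrow> real" where
  "psi_inner a b c = a * (1 + b + b * c) / (1 + a + a * b)"

lemma psi_zero [simp]: "psi d x 0 = 0"
  by (simp add: psi_def)

lemma psi_one: "psi d x 1 = psi_head (x 1) (x 2) ^ d"
  by (simp add: psi_def psi_head_def)

lemma psi_eq_psi_inner: "2 \<le> n \<Longrightarrow> psi d x n = psi_inner (x (n - 1)) (x n) (x (n + 1)) ^ d"
  by (simp add: psi_def psi_inner_def power_mult_distrib [symmetric] power_divide)

lemma psi_two: "psi d x 2 = psi_inner (x 1) (x 2) (x 3) ^ d"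
  by (simp add: psi_eq_psi_inner)

lemma one_add_add_mult_pos: "0 \<le> a \<Longrightarrow> 0 \<le> b \<Longrightarrow> 0 < 1 + a + a * (b :: real)"
  by (simp add: add_pos_nonneg)

lemma psi_head_pos: "0 \<le> a \<Longrightarrow> 0 \<le> b \<Longrightarrow> 0 < psi_head a b"
  by (simp add: psi_head_def add_pos_nonneg)

lemma psi_head_le_one: "0 \<le> a \<Longrightarrow> b \<le> 1 \<Longrightarrow> psi_head a b \<le> 1"
  using mult_left_le[of b a] by (simp add: psi_head_def divide_simps)

lemma psi_head_diff_left:
  "0 \<le> a \<Longrightarrow> 0 \<le> a' \<Longrightarrow> psi_head a b - psi_head a' b = (a' - a) * (1 - b) / ((1 + 2 * a) * (1 + 2 * a'))"
  by (simp add: psi_head_def divide_simps) (simp add: algebra_simps)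

lemma psi_head_diff_right: "0 \<le> a \<Longrightarrow> psi_head a b' - psi_head a b = a * (b' - b) / (1 + 2 * a)"
  by (simp add: psi_head_def divide_simps) (simp add: algebra_simps)

lemma psi_head_mono:
  assumes "0 \<le> a'" "a' \<le> a" "b \<le> b'" "b \<le> 1"
  shows "psi_head a b \<le> psi_head a' b'"
proof -
  have "0 \<le> (a - a') * (1 - b) / ((1 + 2 * a') * (1 + 2 * a))"
    using assms by simp
  hence "psi_head a b \<le> psi_head a' b"
    using psi_head_diff_left[of a' a b] assms by linarith
  also have "\<dots> \<le> psi_head a' b'"
  proof -
    have "0 \<le> a' * (b' - b) / (1 + 2 * a')"
      using assms by simp
    thus ?thesis using psi_head_diff_right[of a' b' b] assms by linarith
  qed
  finally show ?thesis .
qed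

lemma psi_inner_nonneg: "0 \<le> a \<Longrightarrow> 0 \<le> b \<Longrightarrow> 0 \<le> c \<Longrightarrow> 0 \<le> psi_inner a b c"
  by (simp add: psi_inner_def)

lemma psi_inner_diagonal: "0 \<le> t \<Longrightarrow> psi_inner t t t = t"
  using one_add_add_mult_pos[of t t] by (simp add: psi_inner_def)

lemma psi_inner_diff_1:
  assumes "0 \<le> a" "0 \<le> a'" "0 \<le> b"
  shows "psi_inner a' b c - psi_inner a b c = (1 + b + b * c) * (a' - a) / ((1 + a' + a' * b) * (1 + a + a * b))"
  using one_add_add_mult_pos[of a b] one_add_add_mult_pos[of a' b] assms
  by (simp add: psi_inner_def divide_simps) (simp add: algebra_simps)

lemma psi_inner_diff_2:
  assumes "0 \<le> a" "0 \<le> b" "0 \<le> b'"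
  shows "psi_inner a b' c - psi_inner a b c = a * (1 + c + a * c) * (b' - b) / ((1 + a + a * b) * (1 + a + a * b'))"
  using one_add_add_mult_pos[of a b] one_add_add_mult_pos[of a b'] assms
  by (simp add: psi_inner_def divide_simps) (simp add: algebra_simps)

lemma psi_inner_diff_3:
  assumes "0 \<le> a" "0 \<le> b"
  shows "psi_inner a b c' - psi_inner a b c = a * b * (c' - c) / (1 + a + a * b)"
  using one_add_add_mult_pos[of a b] assms
  by (simp add: psi_inner_def divide_simps) (simp add: algebra_simps)

lemma psi_inner_mono:
  assumes "0 \<le> a" "a \<le> a'" "0 \<le> b" "b \<le> b'" "0 \<le> c" "c \<le> c'"
  shows "psi_inner a b c \<le> psi_inner a' b' c'"
proof -
  have "0 \<le> (1 + b + b * c) * (a' - a) / ((1 + a' + a' * b) * (1 + a + a * b))"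
    using assms by simp
  hence "psi_inner a b c \<le> psi_inner a' b c"
    using psi_inner_diff_1[of a a' b c] assms by linarith
  also have "\<dots> \<le> psi_inner a' b' c"
  proof -
    have "0 \<le> a' * (1 + c + a' * c) * (b' - b) / ((1 + a' + a' * b) * (1 + a' + a' * b'))"
      using assms by simp
    thus ?thesis using psi_inner_diff_2[of a' b b' c] assms by linarith
  qed
  also have "\<dots> \<le> psi_inner a' b' c'"
  proof -
    have "0 \<le> a' * b' * (c' - c) / (1 + a' + a' * b')"
      using assms by simp
    thus ?thesis using psi_inner_diff_3[of a' b' c' c] assms by linarith
  qed
  finally show ?thesis .
qed

lemma abs_power_diff_le:
  fixes p q :: real
  assumes "0 \<le> p" "0 \<le> q" "p \<le> M" "q \<le> M"
  shows "\<bar>p ^ n - q ^ n\<bar> \<le> n * M ^ (n - 1) * \<bar>p - q\<bar>"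
proof -
  have "\<bar>\<Sum>i<n. q ^ (n - Suc i) * p ^ i\<bar> \<le> (\<Sum>i<n. M ^ (n - 1))"
  proof (rule order_trans[OF sum_abs sum_mono])
    fix i assume "i \<in> {..<n}"
    hence "M ^ (n - Suc i) * M ^ i = M ^ (n - 1)"
      by (simp flip: power_add)
    moreover have "\<bar>q ^ (n - Suc i) * p ^ i\<bar> \<le> M ^ (n - Suc i) * M ^ i"
      using assms by (simp add: abs_mult power_mono mult_mono)
    ultimately show "\<bar>q ^ (n - Suc i) * p ^ i\<bar> \<le> M ^ (n - 1)" by simp
  qed
  hence "\<bar>p - q\<bar> * \<bar>\<Sum>i<n. q ^ (n - Suc i) * p ^ i\<bar> \<le> \<bar>p - q\<bar> * (n * M ^ (n - 1))"
    by (simp add: mult_left_mono)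
  thus ?thesis
    by (simp add: power_diff_sumr2 abs_mult mult_ac)
qed

lemma psi_head_lipschitz:
  assumes "0 \<le> la" "la \<le> a" "a \<le> ua" "la \<le> a'" "a' \<le> ua"
    and "lb \<le> b" "b \<le> 1" "lb \<le> b'" "b' \<le> 1"
  shows "\<bar>psi_head a b - psi_head a' b'\<bar>
    \<le> (1 - lb) / (1 + 2 * la)^2 * \<bar>a - a'\<bar> + ua / (1 + 2 * la) * \<bar>b - b'\<bar>"
proof -
  have "\<bar>psi_head a b - psi_head a' b\<bar> = \<bar>a - a'\<bar> * (1 - b) / ((1 + 2 * a) * (1 + 2 * a'))"
    using psi_head_diff_left[of a a' b] assms by (simp add: abs_mult abs_minus_commute)
  also have "\<dots> \<le> \<bar>a - a'\<bar> * (1 - lb) / (1 + 2 * la)^2"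
    using assms by (intro frac_le mult_left_mono) (auto simp: power2_eq_square intro!: mult_mono)
  finally have diff_a: "\<bar>psi_head a b - psi_head a' b\<bar> \<le> (1 - lb) / (1 + 2 * la)^2 * \<bar>a - a'\<bar>"
    by (simp add: mult.commute)
  have "\<bar>psi_head a' b - psi_head a' b'\<bar> = a' * \<bar>b - b'\<bar> / (1 + 2 * a')"
    using psi_head_diff_right[of a' b b'] assms by (simp add: abs_mult)
  also have "\<dots> \<le> ua * \<bar>b - b'\<bar> / (1 + 2 * la)"
    using assms by (intro frac_le mult_right_mono) auto
  finally have diff_b: "\<bar>psi_head a' b - psi_head a' b'\<bar> \<le> ua / (1 + 2 * la) * \<bar>b - b'\<bar>"
    by simp
  show ?thesis
    using diff_a diff_b by linarith
qed

lemma psi_inner_lipschitz: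
  assumes "0 \<le> la" "la \<le> a" "a \<le> ua" "la \<le> a'" "a' \<le> ua"
    and "0 \<le> lb" "lb \<le> b" "b \<le> ub" "lb \<le> b'" "b' \<le> ub"
    and "0 \<le> c" "c \<le> uc" "0 \<le> c'" "c' \<le> uc"
  shows "\<bar>psi_inner a b c - psi_inner a' b' c'\<bar>
    \<le> (1 + ub + ub * uc) / (1 + la + la * lb)^2 * \<bar>a - a'\<bar>
     + ua * (1 + uc + ua * uc) / (1 + la + la * lb)^2 * \<bar>b - b'\<bar>
     + ua * ub / (1 + la + la * lb) * \<bar>c - c'\<bar>"
proof -
  have denom_ge: "1 + la + la * lb \<le> 1 + s + s * t" if "la \<le> s" "lb \<le> t" for s t
    using assms that by (intro add_mono mult_mono) auto
  have denom_pos: "0 < 1 + la + la * lb"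
    using assms by (simp add: one_add_add_mult_pos)
  have "\<bar>psi_inner a b c - psi_inner a' b c\<bar>
      = (1 + b + b * c) * \<bar>a - a'\<bar> / ((1 + a + a * b) * (1 + a' + a' * b))"
    using psi_inner_diff_1[of a' a b c] assms by (simp add: abs_mult)
  also have "\<dots> \<le> (1 + ub + ub * uc) * \<bar>a - a'\<bar> / (1 + la + la * lb)^2"
    unfolding power2_eq_square using assms denom_ge denom_pos
    by (intro frac_le mult_right_mono mult_mono add_mono) auto
  finally have diff_a: "\<bar>psi_inner a b c - psi_inner a' b c\<bar>
      \<le> (1 + ub + ub * uc) / (1 + la + la * lb)^2 * \<bar>a - a'\<bar>" by simp
  have "\<bar>psi_inner a' b c - psi_inner a' b' c\<bar>
      = a' * (1 + c + a' * c) * \<bar>b - b'\<bar> / ((1 + a' + a' * b') * (1 + a' + a' * b))"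
    using psi_inner_diff_2[of a' b' b c] assms by (simp add: abs_mult)
  also have "\<dots> \<le> ua * (1 + uc + ua * uc) * \<bar>b - b'\<bar> / (1 + la + la * lb)^2"
    unfolding power2_eq_square using assms denom_ge denom_pos
    by (intro frac_le mult_right_mono mult_mono add_mono) auto
  finally have diff_b: "\<bar>psi_inner a' b c - psi_inner a' b' c\<bar>
      \<le> ua * (1 + uc + ua * uc) / (1 + la + la * lb)^2 * \<bar>b - b'\<bar>" by simp
  have "\<bar>psi_inner a' b' c - psi_inner a' b' c'\<bar> = a' * b' * \<bar>c - c'\<bar> / (1 + a' + a' * b')"
    using psi_inner_diff_3[of a' b' c c'] assms by (simp add: abs_mult)
  also have "\<dots> \<le> ua * ub * \<bar>c - c'\<bar> / (1 + la + la * lb)"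
    using assms denom_ge denom_pos by (intro frac_le mult_right_mono mult_mono) auto
  finally have diff_c: "\<bar>psi_inner a' b' c - psi_inner a' b' c'\<bar>
      \<le> ua * ub / (1 + la + la * lb) * \<bar>c - c'\<bar>" by simp
  show ?thesis
    using diff_a diff_b diff_c by linarith
qed

section \<open>Eventual membership in \<open>Sset 0 1 (9/10)\<close>\<close>

definition tail_bounded :: "nat \<Rightarrow> real \<Rightarrow> (nat \<Rightarrow> real) \<Rightarrow> bool" where
  "tail_bounded N t x \<longleftrightarrow> (\<forall>n\<ge>1. 0 \<le> x n \<and> x n \<le> 1) \<and> (\<forall>n\<ge>N. x n \<le> t)"

definition zeros_persist :: "(nat \<Rightarrow> real) \<Rightarrow> bool" where
  "zeros_persist x \<longleftrightarrow> (\<forall>n\<ge>1. x n = 0 \<longrightarrow> x (Suc n) = 0)"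

lemma psi_in_unit_interval:
  assumes x: "\<forall>n\<ge>1. 0 \<le> x n \<and> x n \<le> 1" and "1 \<le> n"
  shows "0 \<le> psi d x n \<and> psi d x n \<le> 1"
proof (cases "n = 1")
  case True
  show ?thesis
    unfolding True psi_one using x psi_head_pos[of "x 1" "x 2"] psi_head_le_one[of "x 1" "x 2"]
    by (simp add: power_le_one)
next
  case False
  hence "2 \<le> n" using \<open>1 \<le> n\<close> by simp
  hence "0 \<le> psi_inner (x (n - 1)) (x n) (x (n + 1))"
    and "psi_inner (x (n - 1)) (x n) (x (n + 1)) \<le> psi_inner 1 1 1"
    using x by (auto intro!: psi_inner_nonneg psi_inner_mono)
  thus ?thesis
    using \<open>2 \<le> n\<close> by (simp add: psi_eq_psi_inner psi_inner_diagonal power_le_one)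
qed

lemma tail_bounded_mono: "tail_bounded N t x \<Longrightarrow> t \<le> t' \<Longrightarrow> tail_bounded N t' x"
  unfolding tail_bounded_def by force

lemma tail_bounded_psi:
  assumes "2 \<le> N" and x: "tail_bounded (Suc N) t x"
  shows "tail_bounded N (psi_inner 1 1 t ^ d) (psi d x)"
proof -
  have unit: "\<forall>n\<ge>1. 0 \<le> x n \<and> x n \<le> 1" and tail: "\<forall>n\<ge>Suc N. x n \<le> t"
    using x by (auto simp: tail_bounded_def)
  have "psi d x n \<le> psi_inner 1 1 t ^ d" if "N \<le> n" for n
  proof -
    have "0 \<le> psi_inner (x (n - 1)) (x n) (x (n + 1))"
      and "psi_inner (x (n - 1)) (x n) (x (n + 1)) \<le> psi_inner 1 1 t"
      using unit tail \<open>2 \<le> N\<close> that by (auto intro!: psi_inner_nonneg psi_inner_mono)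
    thus ?thesis
      using \<open>2 \<le> N\<close> that by (simp add: psi_eq_psi_inner power_mono)
  qed
  thus ?thesis
    using psi_in_unit_interval[OF unit] by (simp add: tail_bounded_def)
qed

lemma tail_bounded_2_reached:
  assumes "1 \<le> d" "2 \<le> N" "t < 1" "tail_bounded N t x"
  shows "\<exists>j t'. t' < 1 \<and> tail_bounded 2 t' ((psi d ^^ j) x)"
  using assms(2-4)
proof (induction N arbitrary: t x rule: dec_induct)
  case base
  then show ?case
    by (metis funpow_0)
next
  case (step N)
  have "0 \<le> x (Suc N)" "x (Suc N) \<le> t"
    using step.prems by (auto simp: tail_bounded_def)
  hence "0 \<le> t" by linarith
  hence "psi_inner 1 1 t ^ d < 1"
    using \<open>t < 1\<close> \<open>1 \<le> d\<close> by (simp add: psi_inner_def power_less_one_iff)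
  moreover have "tail_bounded N (psi_inner 1 1 t ^ d) (psi d x)"
    using tail_bounded_psi step by simp
  ultimately obtain j t' where "t' < 1" "tail_bounded 2 t' ((psi d ^^ j) (psi d x))"
    using step.IH by blast
  thus ?case
    by (metis funpow_Suc_right o_apply)
qed

lemma psi_inner_1_pow_le:
  assumes "2 \<le> d" "9/10 \<le> s" "s \<le> 1"
  shows "psi_inner 1 s s ^ d \<le> 1 - 6/5 * (1 - s)"
proof -
  have "0 \<le> psi_inner 1 s s" "psi_inner 1 s s \<le> psi_inner 1 1 1"
    using assms by (auto intro!: psi_inner_nonneg psi_inner_mono)
  hence "psi_inner 1 s s ^ d \<le> psi_inner 1 s s ^ 2"
    using assms(1) by (intro power_decreasing) (auto simp: psi_inner_diagonal)
  also have "\<dots> \<le> 1 - 6/5 * (1 - s)"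
  proof -
    \<comment> \<open>\<open>psi_inner 1 s s = (1 + s + s\<^sup>2) / (2 + s)\<close> and \<open>1 - 6/5 * (1 - s) = (6 * s - 1) / 5\<close>\<close>
    have "s * s \<ge> 81/100" "s * s * s \<ge> 729/1000"
      using assms mult_mono[of "9/10" s "9/10" s] mult_mono[of "81/100" "s * s" "9/10" s] by auto
    hence "0 \<le> (1 - s) * (5 * (s * s * s) + 9 * (s * s) + s - 9)"
      using assms by (intro mult_nonneg_nonneg) auto
    moreover have "(6 * s - 1) * ((2 + s) * (2 + s)) - 5 * ((1 + s + s * s) * (1 + s + s * s))
        = (1 - s) * (5 * (s * s * s) + 9 * (s * s) + s - 9)"
      by (simp add: algebra_simps)
    ultimately have "5 * ((1 + s + s * s) * (1 + s + s * s)) \<le> (6 * s - 1) * ((2 + s) * (2 + s))"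
      by linarith
    moreover have "0 < (2 + s) * (2 + s)"
      using assms by simp
    ultimately show ?thesis
      by (simp add: psi_inner_def power2_eq_square divide_simps)
  qed
  finally show ?thesis .
qed

lemma tail_bounded_2_psi:
  assumes "2 \<le> d" "t \<le> 1" and x: "tail_bounded 2 t x"
  shows "tail_bounded 2 (max (9/10) (1 - 6/5 * (1 - t))) (psi d x)"
proof -
  define s where "s = max (9/10) t"
  have unit: "\<forall>n\<ge>1. 0 \<le> x n \<and> x n \<le> 1" and tail: "\<forall>n\<ge>2. x n \<le> s"
    using x by (auto simp: tail_bounded_def s_def)
  have "psi d x n \<le> max (9/10) (1 - 6/5 * (1 - t))" if "2 \<le> n" for n
  proof -
    have "0 \<le> psi_inner (x (n - 1)) (x n) (x (n + 1))"
      and "psi_inner (x (n - 1)) (x n) (x (n + 1)) \<le> psi_inner 1 s s"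
      using unit tail that by (auto intro!: psi_inner_nonneg psi_inner_mono)
    hence "psi d x n \<le> psi_inner 1 s s ^ d"
      using that by (simp add: psi_eq_psi_inner power_mono)
    also have "\<dots> \<le> 1 - 6/5 * (1 - s)"
      using psi_inner_1_pow_le assms by (simp add: s_def)
    also have "\<dots> \<le> max (9/10) (1 - 6/5 * (1 - t))"
      by (simp add: s_def max_def)
    finally show ?thesis .
  qed
  thus ?thesis
    using psi_in_unit_interval[OF unit] by (simp add: tail_bounded_def)
qed

lemma tail_bounded_9_10_invariant:
  assumes "2 \<le> d" "tail_bounded 2 (9/10) x"
  shows "tail_bounded 2 (9/10) ((psi d ^^ k) x)"
proof (induction k)
  case (Suc k)
  then show ?case
    using tail_bounded_2_psi[OF assms(1), of "9/10"] by simp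
qed (use assms in simp)

lemma tail_bounded_9_10_reached:
  assumes "2 \<le> d" "t < 1" "tail_bounded 2 t x"
  shows "\<exists>j. tail_bounded 2 (9/10) ((psi d ^^ j) x)"
proof -
  have bound: "tail_bounded 2 (max (9/10) (1 - (6/5)^j * (1 - t))) ((psi d ^^ j) x)" for j
  proof (induction j)
    case 0
    then show ?case
      using assms tail_bounded_mono by fastforce
  next
    case (Suc j)
    let ?t = "max (9/10) (1 - (6/5)^j * (1 - t))"
    have "tail_bounded 2 (max (9/10) (1 - 6/5 * (1 - ?t))) ((psi d ^^ Suc j) x)"
      using tail_bounded_2_psi[OF assms(1) _ Suc.IH] assms(2) by simp
    moreover have "max (9/10) (1 - 6/5 * (1 - ?t)) \<le> max (9/10) (1 - (6/5)^Suc j * (1 - t))"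
      by (auto simp: max_def mult_ac)
    ultimately show ?case
      using tail_bounded_mono by blast
  qed
  obtain j where "1 / (1 - t) / 10 < (6/5::real)^j"
    using real_arch_pow[of "6/5::real" "1 / (1 - t) / 10"] by auto
  hence "1 - (6/5)^j * (1 - t) \<le> 9/10"
    using assms(2) by (simp add: field_simps)
  thus ?thesis
    using bound[of j] by (metis max_absorb1)
qed

lemma psi_orbit_eventually_tail_bounded:
  assumes "2 \<le> d" "2 \<le> N" "t < 1" "tail_bounded N t x"
  shows "\<exists>K. \<forall>k\<ge>K. tail_bounded 2 (9/10) ((psi d ^^ k) x)"
proof -
  obtain i t' where "t' < 1" "tail_bounded 2 t' ((psi d ^^ i) x)"
    using tail_bounded_2_reached assms by (metis one_le_numeral order_trans)
  then obtain j where K: "tail_bounded 2 (9/10) ((psi d ^^ (j + i)) x)"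
    using tail_bounded_9_10_reached[OF assms(1)] by (metis funpow_add o_apply)
  have "tail_bounded 2 (9/10) ((psi d ^^ k) x)" if "j + i \<le> k" for k
  proof -
    have "(psi d ^^ k) x = (psi d ^^ (k - (j + i))) ((psi d ^^ (j + i)) x)"
      using that by (metis funpow_add le_add_diff_inverse2 o_apply)
    thus ?thesis
      using tail_bounded_9_10_invariant[OF assms(1) K] by simp
  qed
  thus ?thesis
    by blast
qed

lemma psi_zeros_persist:
  assumes nonneg: "\<forall>n\<ge>1. 0 \<le> x n" and "zeros_persist x"
  shows "zeros_persist (psi d x)"
  unfolding zeros_persist_def
proof (intro allI impI)
  fix n :: nat
  assume "1 \<le> n" and zero: "psi d x n = 0"
  have "psi d x 1 \<noteq> 0"
    unfolding psi_one using psi_head_pos[of "x 1" "x 2"] nonneg by simp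
  hence "n \<noteq> 1"
    using zero by auto
  hence "2 \<le> n" using \<open>1 \<le> n\<close> by simp
  hence "psi_inner (x (n - 1)) (x n) (x (n + 1)) = 0" and "d \<noteq> 0"
    using zero by (auto simp: psi_eq_psi_inner)
  moreover have "0 < 1 + x n + x n * x (n + 1)" "0 < 1 + x (n - 1) + x (n - 1) * x n"
    using nonneg \<open>2 \<le> n\<close> by (auto intro!: one_add_add_mult_pos)
  ultimately have "x (n - 1) = 0"
    by (simp add: psi_inner_def)
  moreover have "Suc (n - 1) = n" "1 \<le> n - 1"
    using \<open>2 \<le> n\<close> by auto
  ultimately have "x n = 0"
    using \<open>zeros_persist x\<close> unfolding zeros_persist_def by metis
  thus "psi d x (Suc n) = 0"
    using \<open>2 \<le> n\<close> \<open>d \<noteq> 0\<close> by (simp add: psi_eq_psi_inner psi_inner_def)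
qed

lemma zeros_persist_le:
  assumes "zeros_persist x" "x j = 0" "1 \<le> j" "j \<le> n"
  shows "x n = 0"
  using assms(4,2)
proof (induction n rule: dec_induct)
  case (step n)
  then show ?case
    using assms(1,3) by (simp add: zeros_persist_def)
qed

lemma psi_orbit_zeros_persist:
  assumes "\<forall>n\<ge>1. 0 \<le> x n \<and> x n \<le> 1" "zeros_persist x"
  shows "zeros_persist ((psi d ^^ k) x)" and "\<forall>n\<ge>1. 0 \<le> (psi d ^^ k) x n \<and> (psi d ^^ k) x n \<le> 1"
proof (induction k)
  case (Suc k)
  { case 1 show ?case using Suc psi_zeros_persist by simp }
  { case 2 show ?case using Suc psi_in_unit_interval by simp }
qed (use assms in simp_all)

lemma has_sum_even_extension:
  fixes p :: "nat \<Rightarrow> real"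
  assumes "\<And>n. 0 \<le> p n" "p sums S"
  shows "((\<lambda>i::int. p (nat \<bar>i\<bar>)) has_sum (2 * S - p 0)) UNIV"
proof -
  let ?q = "\<lambda>i::int. p (nat \<bar>i\<bar>)"
  have "(p has_sum S) UNIV"
    using assms by (intro sums_nonneg_imp_has_sum)
  hence nonneg_part: "(?q has_sum S) (range int)"
    by (simp add: has_sum_reindex o_def)
  have "(\<lambda>n. p (Suc n)) sums (S - p 0)"
    using assms(2) sums_Suc_iff[of p "S - p 0"] by simp
  hence "((\<lambda>n. p (Suc n)) has_sum (S - p 0)) UNIV"
    using assms(1) by (intro sums_nonneg_imp_has_sum)
  moreover have "inj (\<lambda>n. - int (Suc n))"
    by (auto simp: inj_def)
  ultimately have neg_part: "(?q has_sum (S - p 0)) (range (\<lambda>n. - int (Suc n)))"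
    by (simp add: has_sum_reindex o_def nat_add_distrib)
  have "range int \<union> range (\<lambda>n. - int (Suc n)) = UNIV"
  proof -
    have "i \<in> range int \<union> range (\<lambda>n. - int (Suc n))" for i :: int
    proof (cases "0 \<le> i")
      case True
      then show ?thesis by (metis UnI1 nonneg_int_cases rangeI)
    next
      case False
      hence "i = - int (Suc (nat (- i - 1)))" by simp
      then show ?thesis by blast
    qed
    thus ?thesis by blast
  qed
  moreover have "range int \<inter> range (\<lambda>n. - int (Suc n)) = {}"
    by auto
  ultimately show ?thesis
    using has_sum_Un_disjoint[OF nonneg_part neg_part] by simp
qed

lemma mem_Rset_if_summable_prod:
  fixes x :: "nat \<Rightarrow> real"
  assumes "x 0 = 0" and nonneg: "\<forall>n\<ge>1. 0 \<le> x n" and "zeros_persist x"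
    and summable: "summable (\<lambda>n. \<Prod>m=1..n. x m)"
  shows "x \<in> Rset"
proof -
  define p where "p = (\<lambda>n. \<Prod>m=1..n. x m)"
  have "summable p"
    unfolding p_def by (fact summable)
  have p_Suc: "p (Suc n) = p n * x (Suc n)" for n
    by (simp add: p_def prod.nat_ivl_Suc' mult.commute)
  have p_nonneg: "0 \<le> p n" for n
    unfolding p_def using nonneg by (intro prod_nonneg) auto
  define S where "S = 2 * suminf p - 1"
  have "1 \<le> suminf p"
    using sum_le_suminf[of p "{0}"] \<open>summable p\<close> p_nonneg by (simp add: p_def)
  hence "0 < S"
    by (simp add: S_def)
  define z where "z = (\<lambda>i::int. p (nat \<bar>i\<bar>) / S)"
  have "((\<lambda>i. p (nat \<bar>i\<bar>)) has_sum S) UNIV"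
    using has_sum_even_extension[of p "suminf p"] p_nonneg \<open>summable p\<close>
    by (simp add: S_def summable_sums) (simp add: p_def)
  hence "((\<lambda>i. inverse S * p (nat \<bar>i\<bar>)) has_sum (inverse S * S)) UNIV"
    by (rule has_sum_cmult_right)
  hence "(z has_sum 1) UNIV"
    using \<open>0 < S\<close> by (simp add: z_def divide_inverse mult.commute)
  moreover have "p (nat \<bar>c\<bar>) \<noteq> 0"
    if "a \<le> c" "c \<le> b" "p (nat \<bar>a\<bar>) \<noteq> 0" "p (nat \<bar>b\<bar>) \<noteq> 0" for a b c :: int
  proof -
    have "nat \<bar>c\<bar> \<le> nat \<bar>a\<bar> \<or> nat \<bar>c\<bar> \<le> nat \<bar>b\<bar>"
      using that(1,2) by linarith
    thus ?thesis
      using that(3,4) by (auto simp: p_def)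
  qed
  ultimately have "z \<in> Eset"
    using p_nonneg \<open>0 < S\<close> unfolding Eset_def prob_dist_def z_def by auto
  moreover have "Rmap z n = x n" for n
  proof (cases n)
    case (Suc m)
    have "z (int n - 1) = p m / S" "z (int n) = p n / S"
      using Suc by (simp_all add: z_def nat_add_distrib)
    moreover have "x n = 0" if "p m = 0"
      using that zeros_persist_le[OF \<open>zeros_persist x\<close>, of _ n] Suc
      by (auto simp: p_def)
    ultimately show ?thesis
      using Suc \<open>0 < S\<close> p_Suc by (simp add: Rmap_def)
  qed (simp add: Rmap_def \<open>x 0 = 0\<close>)
  ultimately show ?thesis
    unfolding Rset_def by (metis ext image_eqI)
qed

lemma summable_prod_if_tail_bounded:
  assumes x: "tail_bounded 2 t x" and "t < 1"
  shows "summable (\<lambda>n. \<Prod>m=1..n. x m)"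
proof -
  have unit: "\<forall>n\<ge>1. 0 \<le> x n \<and> x n \<le> 1" and tail: "\<forall>n\<ge>2. x n \<le> t"
    using x by (auto simp: tail_bounded_def)
  have "0 \<le> t"
    using unit tail by (meson one_le_numeral order.trans order_refl)
  have bound: "(\<Prod>m=1..Suc n. x m) \<le> t ^ n" for n
  proof (induction n)
    case (Suc n)
    have "(\<Prod>m=1..Suc (Suc n). x m) = (\<Prod>m=1..Suc n. x m) * x (Suc (Suc n))"
      by (simp add: prod.nat_ivl_Suc')
    also have "\<dots> \<le> t ^ n * t"
      using Suc unit tail \<open>0 \<le> t\<close> by (intro mult_mono prod_nonneg) auto
    finally show ?case
      by (simp add: mult.commute)
  qed (use unit in simp)
  have "0 \<le> (\<Prod>m=1..n. x m)" for n
    using unit by (intro prod_nonneg) auto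
  hence "norm (\<Prod>m=1..Suc n. x m) \<le> t ^ n" for n
    using bound[of n] by (metis abs_of_nonneg real_norm_def)
  hence "summable (\<lambda>n. \<Prod>m=1..Suc n. x m)"
    using \<open>0 \<le> t\<close> \<open>t < 1\<close> by (intro summable_comparison_test'[OF summable_geometric[of t]]) auto
  thus ?thesis
    by (subst summable_Suc_iff [symmetric])
qed

lemma mem_Sset_if_tail_bounded:
  assumes "x 0 = 0" "zeros_persist x" "tail_bounded 2 t x" "t < 1"
  shows "x \<in> Sset 0 1 t"
proof -
  have "x \<in> Rset"
    using assms summable_prod_if_tail_bounded
    by (intro mem_Rset_if_summable_prod) (auto simp: tail_bounded_def)
  thus ?thesis
    using assms(3) by (simp add: Sset_def tail_bounded_def)
qed

lemma Rmap_pos_index: "1 \<le> n \<Longrightarrow> Rmap w n = (if w (int n - 1) = 0 then 0 else w (int n) / w (int n - 1))"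
  by (simp add: Rmap_def)

lemma Rmap_nonincreasing:
  assumes nonneg: "\<And>i. 0 \<le> w i" and decr: "\<And>i. 0 \<le> i \<Longrightarrow> w (i + 1) \<le> w i"
  shows "\<forall>n\<ge>1. 0 \<le> Rmap w n \<and> Rmap w n \<le> 1" and "zeros_persist (Rmap w)"
proof -
  have step: "w (int n) \<le> w (int n - 1)" if "1 \<le> n" for n
    using decr[of "int n - 1"] that by simp
  show "\<forall>n\<ge>1. 0 \<le> Rmap w n \<and> Rmap w n \<le> 1"
    using step nonneg by (auto simp: Rmap_pos_index divide_le_eq_1 less_le)
  have "w (int n) = 0" if "1 \<le> n" "Rmap w n = 0" for n
    using that step[OF that(1)] nonneg[of "int n"] by (auto simp: Rmap_pos_index split: if_splits)
  thus "zeros_persist (Rmap w)"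
    unfolding zeros_persist_def by (simp add: Rmap_def)
qed

lemma Rmap_le_if_ratio_le:
  assumes nonneg: "\<And>i. 0 \<le> w i" and ratio: "\<And>i. k \<le> i \<Longrightarrow> w (i + 1) \<le> c * w i"
    and "0 \<le> c" "1 \<le> n" "k + 1 \<le> int n"
  shows "Rmap w n \<le> c"
proof (cases "w (int n - 1) = 0")
  case False
  hence "0 < w (int n - 1)"
    using nonneg less_le by metis
  moreover have "w (int n) \<le> c * w (int n - 1)"
    using ratio[of "int n - 1"] \<open>k + 1 \<le> int n\<close> by simp
  ultimately show ?thesis
    using \<open>1 \<le> n\<close> by (simp add: Rmap_pos_index pos_divide_le_eq)
qed (use assms in \<open>simp add: Rmap_pos_index\<close>)

lemma Rmap_good:
  assumes "good w"
  shows "zeros_persist (Rmap w)" and "\<exists>N t. 2 \<le> N \<and> t < 1 \<and> tail_bounded N t (Rmap w)"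
proof -
  obtain k c where "k \<ge> 0" "0 \<le> c" "c < 1" and flat: "\<And>i. 0 \<le> i \<Longrightarrow> i < k \<Longrightarrow> w i = w (i + 1)"
    and ratio: "\<And>i. k \<le> i \<Longrightarrow> w (i + 1) \<le> c * w i" and nonneg: "\<And>i. 0 \<le> w i"
    using assms unfolding good_def by blast
  have decr: "w (i + 1) \<le> w i" if "0 \<le> i" for i
  proof (cases "i < k")
    case False
    hence "w (i + 1) \<le> c * w i" by (simp add: ratio)
    also have "\<dots> \<le> w i"
      using \<open>0 \<le> c\<close> \<open>c < 1\<close> nonneg[of i] by (intro mult_left_le_one_le) auto
    finally show ?thesis .
  qed (use flat that in simp)
  show "zeros_persist (Rmap w)"
    using Rmap_nonincreasing(2)[of w] nonneg decr by blast
  have "tail_bounded (nat k + 2) c (Rmap w)"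
    using Rmap_nonincreasing(1)[of w] nonneg decr Rmap_le_if_ratio_le[of w k c] ratio \<open>0 \<le> c\<close> \<open>k \<ge> 0\<close>
    by (auto simp: tail_bounded_def)
  thus "\<exists>N t. 2 \<le> N \<and> t < 1 \<and> tail_bounded N t (Rmap w)"
    using \<open>c < 1\<close> by (intro exI[of _ "nat k + 2"] exI[of _ c]) simp
qed

section \<open>Contraction on boxes\<close>

type_synonym box = "real \<times> real \<times> real \<times> real \<times> real"

fun in_box :: "box \<Rightarrow> (nat \<Rightarrow> real) \<Rightarrow> bool" where
  "in_box (l1, u1, l2, u2, e) x \<longleftrightarrow>
     l1 \<le> x 1 \<and> x 1 \<le> u1 \<and> l2 \<le> x 2 \<and> x 2 \<le> u2 \<and> (\<forall>n\<ge>3. 0 \<le> x n \<and> x n \<le> e)"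

type_synonym witness = "real \<times> real \<times> real \<times> real \<times> real"

(* The witnesses bound psi_head and psi_inner at the extreme corners of the box: a and b for the
   first coordinate, c and g for the second, h for the third; further out psi_inner e e e = e.
   Denominators are cleared, so that checking a certificate is pure rational arithmetic. *)
fun step_certificate :: "nat \<Rightarrow> box \<Rightarrow> witness \<Rightarrow> box \<Rightarrow> bool" where
  "step_certificate d (l1, u1, l2, u2, e) (a, b, c, g, h) (l1', u1', l2', u2', e') \<longleftrightarrow>
     0 \<le> l1 \<and> 0 \<le> u1 \<and> u1 \<le> 1 \<and> 0 \<le> l2 \<and> 0 \<le> u2 \<and> u2 \<le> 1 \<and> 0 \<le> e \<and> e \<le> 1 \<and>
     0 \<le> a \<and> a * (1 + 2 * u1) \<le> 1 + u1 + u1 * l2 \<and> l1' \<le> a ^ d \<and>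
     1 + l1 + l1 * u2 \<le> b * (1 + 2 * l1) \<and> b ^ d \<le> u1' \<and>
     0 \<le> c \<and> c * (1 + l1 + l1 * l2) \<le> l1 * (1 + l2) \<and> l2' \<le> c ^ d \<and>
     u1 * (1 + u2 + u2 * e) \<le> g * (1 + u1 + u1 * u2) \<and> g ^ d \<le> u2' \<and>
     u2 * (1 + e + e * e) \<le> h * (1 + u2 + u2 * e) \<and> h ^ d \<le> e' \<and> e ^ d \<le> e'"

lemma step_certificate_bounds:
  assumes "step_certificate d (l1, u1, l2, u2, e) (a, b, c, g, h) B'"
  shows "a \<le> psi_head u1 l2" "psi_head l1 u2 \<le> b" "c \<le> psi_inner l1 l2 0"
    "psi_inner u1 u2 e \<le> g" "psi_inner u2 e e \<le> h"
  using assms one_add_add_mult_pos[of l1 l2] one_add_add_mult_pos[of u1 u2] one_add_add_mult_pos[of u2 e]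
  by (cases B'; simp add: psi_head_def psi_inner_def divide_simps add_pos_nonneg)+

lemma psi_in_box:
  assumes cert: "step_certificate d B q B'" and x: "in_box B x"
  shows "in_box B' (psi d x)"
proof -
  obtain l1 u1 l2 u2 e where B: "B = (l1, u1, l2, u2, e)"
    by (cases B) auto
  obtain a b c g h where q: "q = (a, b, c, g, h)"
    by (cases q) auto
  obtain l1' u1' l2' u2' e' where B': "B' = (l1', u1', l2', u2', e')"
    by (cases B') auto
  note cert = cert[unfolded B q B'] and corners = step_certificate_bounds[OF cert[unfolded B q]]
  note x = x[unfolded B in_box.simps]
  have "a \<le> psi_head (x 1) (x 2)" "psi_head (x 1) (x 2) \<le> b"
    using cert x corners psi_head_mono[of "x 1" u1 l2 "x 2"] psi_head_mono[of l1 "x 1" "x 2" u2]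
    by auto
  hence "a ^ d \<le> psi d x 1" "psi d x 1 \<le> b ^ d"
    unfolding psi_one using cert by (auto intro!: power_mono)
  hence first: "l1' \<le> psi d x 1" "psi d x 1 \<le> u1'"
    using cert by auto
  have "c \<le> psi_inner (x 1) (x 2) (x 3)" "psi_inner (x 1) (x 2) (x 3) \<le> g"
    using cert x corners psi_inner_mono[of l1 "x 1" l2 "x 2" 0 "x 3"]
      psi_inner_mono[of "x 1" u1 "x 2" u2 "x 3" e] by auto
  hence "c ^ d \<le> psi d x 2" "psi d x 2 \<le> g ^ d"
    unfolding psi_two using cert by (auto intro!: power_mono)
  hence second: "l2' \<le> psi d x 2" "psi d x 2 \<le> u2'"
    using cert by auto
  have tail: "0 \<le> psi d x n \<and> psi d x n \<le> e'" if "3 \<le> n" for n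
  proof -
    have "0 \<le> x (n - 1)"
      using x cert that by (cases "n = 3") auto
    moreover have "0 \<le> x n" "0 \<le> x (n + 1)" "x n \<le> e" "x (n + 1) \<le> e"
      using x that by auto
    ultimately have nonneg: "0 \<le> psi_inner (x (n - 1)) (x n) (x (n + 1))"
      by (simp add: psi_inner_nonneg)
    have "psi_inner (x (n - 1)) (x n) (x (n + 1)) ^ d \<le> e'"
    proof (cases "n = 3")
      case True
      hence "psi_inner (x (n - 1)) (x n) (x (n + 1)) \<le> psi_inner u2 e e"
        using x cert \<open>0 \<le> x n\<close> \<open>0 \<le> x (n + 1)\<close> \<open>x n \<le> e\<close> \<open>x (n + 1) \<le> e\<close>
        by (intro psi_inner_mono) auto
      hence "psi_inner (x (n - 1)) (x n) (x (n + 1)) \<le> h"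
        using corners by linarith
      thus ?thesis
        using nonneg cert by (auto intro: order.trans power_mono)
    next
      case False
      hence "x (n - 1) \<le> e"
        using x that by auto
      hence "psi_inner (x (n - 1)) (x n) (x (n + 1)) \<le> psi_inner e e e"
        using \<open>0 \<le> x (n - 1)\<close> \<open>x n \<le> e\<close> \<open>x (n + 1) \<le> e\<close> \<open>0 \<le> x n\<close> \<open>0 \<le> x (n + 1)\<close>
        by (intro psi_inner_mono)
      thus ?thesis
        using nonneg cert psi_inner_diagonal[of e] by (auto intro: order.trans power_mono)
    qed
    thus ?thesis
      using nonneg that by (simp add: psi_eq_psi_inner)
  qed
  show ?thesis
    unfolding B' using first second tail by simp
qed

(* The closed ball of radius M for the distance max |x 1 - y 1| (SUP n\<ge>2. |x n - y n| / \<rho>). *)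
definition weighted_dist_le :: "real \<Rightarrow> (nat \<Rightarrow> real) \<Rightarrow> (nat \<Rightarrow> real) \<Rightarrow> real \<Rightarrow> bool" where
  "weighted_dist_le \<rho> x y M \<longleftrightarrow> \<bar>x 1 - y 1\<bar> \<le> M \<and> (\<forall>n\<ge>2. \<bar>x n - y n\<bar> \<le> \<rho> * M)"

(* The last three inequalities bound the Lipschitz constants, for the distance above, of the first,
   the second and the remaining coordinates of psi d on the box. *)
fun contraction_certificate :: "nat \<Rightarrow> box \<Rightarrow> witness \<Rightarrow> real \<Rightarrow> real \<Rightarrow> bool" where
  "contraction_certificate d (l1, u1, l2, u2, e) (a, b, c, g, h) \<rho> \<theta> \<longleftrightarrow>
     step_certificate d (l1, u1, l2, u2, e) (a, b, c, g, h) (l1, u1, l2, u2, e) \<and>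
     e \<le> u2 \<and> 0 < \<rho> \<and> 0 \<le> \<theta> \<and> \<theta> < 1 \<and>
     d * b ^ (d - 1) * ((1 - l2) / (1 + 2 * l1)^2 + u1 / (1 + 2 * l1) * \<rho>) \<le> \<theta> \<and>
     d * g ^ (d - 1) * ((1 + u2 + u2 * e) / (1 + l1 + l1 * l2)^2
       + (u1 * (1 + e + u1 * e) / (1 + l1 + l1 * l2)^2 + u1 * u2 / (1 + l1 + l1 * l2)) * \<rho>)
       \<le> \<theta> * \<rho> \<and>
     d * h ^ (d - 1) * (1 + e + e * e + u2 * (1 + e + u2 * e) + u2 * e) \<le> \<theta>"

lemma psi_one_lipschitz:
  assumes cert: "step_certificate d (l1, u1, l2, u2, e) (a, b, c, g, h) B'"
    and x: "in_box (l1, u1, l2, u2, e) x" and y: "in_box (l1, u1, l2, u2, e) y"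
  shows "\<bar>psi d x 1 - psi d y 1\<bar>
    \<le> d * b ^ (d - 1) * ((1 - l2) / (1 + 2 * l1)^2 * \<bar>x 1 - y 1\<bar> + u1 / (1 + 2 * l1) * \<bar>x 2 - y 2\<bar>)"
proof -
  have "psi_head l1 u2 \<le> b"
    using step_certificate_bounds[OF cert] by simp
  hence "0 \<le> psi_head (z 1) (z 2) \<and> psi_head (z 1) (z 2) \<le> b" if "in_box (l1, u1, l2, u2, e) z" for z
    using that cert psi_head_mono[of l1 "z 1" "z 2" u2] psi_head_pos[of "z 1" "z 2"]
    by (cases B') auto
  hence "\<bar>psi d x 1 - psi d y 1\<bar> \<le> d * b ^ (d - 1) * \<bar>psi_head (x 1) (x 2) - psi_head (y 1) (y 2)\<bar>"
    unfolding psi_one using x y by (meson abs_power_diff_le)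
  also have "\<dots> \<le> d * b ^ (d - 1) * ((1 - l2) / (1 + 2 * l1)^2 * \<bar>x 1 - y 1\<bar> + u1 / (1 + 2 * l1) * \<bar>x 2 - y 2\<bar>)"
    using x y cert psi_head_lipschitz[of l1 "x 1" u1 "y 1" l2 "x 2" "y 2"] \<open>psi_head l1 u2 \<le> b\<close>
      psi_head_pos[of l1 u2]
    by (cases B') (auto intro!: mult_left_mono)
  finally show ?thesis .
qed

lemma psi_two_lipschitz:
  assumes cert: "step_certificate d (l1, u1, l2, u2, e) (a, b, c, g, h) B'"
    and x: "in_box (l1, u1, l2, u2, e) x" and y: "in_box (l1, u1, l2, u2, e) y"
  shows "\<bar>psi d x 2 - psi d y 2\<bar>
    \<le> d * g ^ (d - 1) * ((1 + u2 + u2 * e) / (1 + l1 + l1 * l2)^2 * \<bar>x 1 - y 1\<bar>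
       + u1 * (1 + e + u1 * e) / (1 + l1 + l1 * l2)^2 * \<bar>x 2 - y 2\<bar>
       + u1 * u2 / (1 + l1 + l1 * l2) * \<bar>x 3 - y 3\<bar>)"
proof -
  have "psi_inner u1 u2 e \<le> g"
    using step_certificate_bounds[OF cert] by simp
  hence "0 \<le> psi_inner (z 1) (z 2) (z 3) \<and> psi_inner (z 1) (z 2) (z 3) \<le> g"
    if "in_box (l1, u1, l2, u2, e) z" for z
    using that cert psi_inner_mono[of "z 1" u1 "z 2" u2 "z 3" e]
    by (cases B') (auto intro!: psi_inner_nonneg)
  hence "\<bar>psi d x 2 - psi d y 2\<bar>
      \<le> d * g ^ (d - 1) * \<bar>psi_inner (x 1) (x 2) (x 3) - psi_inner (y 1) (y 2) (y 3)\<bar>"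
    unfolding psi_two using x y by (meson abs_power_diff_le)
  also have "\<dots> \<le> d * g ^ (d - 1) * ((1 + u2 + u2 * e) / (1 + l1 + l1 * l2)^2 * \<bar>x 1 - y 1\<bar>
       + u1 * (1 + e + u1 * e) / (1 + l1 + l1 * l2)^2 * \<bar>x 2 - y 2\<bar>
       + u1 * u2 / (1 + l1 + l1 * l2) * \<bar>x 3 - y 3\<bar>)"
    using x y cert psi_inner_lipschitz[of l1 "x 1" u1 "y 1" l2 "x 2" u2 "y 2" "x 3" e "y 3"]
      \<open>psi_inner u1 u2 e \<le> g\<close> psi_inner_nonneg[of u1 u2 e]
    by (cases B') (auto intro!: mult_left_mono)
  finally show ?thesis .
qed

lemma psi_tail_lipschitz:
  assumes cert: "step_certificate d (l1, u1, l2, u2, e) (a, b, c, g, h) B'" and "e \<le> u2"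
    and x: "in_box (l1, u1, l2, u2, e) x" and y: "in_box (l1, u1, l2, u2, e) y" and "3 \<le> n"
  shows "\<bar>psi d x n - psi d y n\<bar>
    \<le> d * h ^ (d - 1) * ((1 + e + e * e) * \<bar>x (n - 1) - y (n - 1)\<bar>
       + u2 * (1 + e + u2 * e) * \<bar>x n - y n\<bar> + u2 * e * \<bar>x (n + 1) - y (n + 1)\<bar>)"
proof -
  have box: "0 \<le> z (n - 1) \<and> z (n - 1) \<le> u2 \<and> 0 \<le> z n \<and> z n \<le> e \<and> 0 \<le> z (n + 1) \<and> z (n + 1) \<le> e"
    if "in_box (l1, u1, l2, u2, e) z" for z
  proof (cases "n = 3")
    case True
    then show ?thesis
      using that cert by (cases B') auto
  next
    case False
    hence "3 \<le> n - 1"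
      using \<open>3 \<le> n\<close> by simp
    then show ?thesis
      using that \<open>e \<le> u2\<close> \<open>3 \<le> n\<close> by auto
  qed
  have "psi_inner u2 e e \<le> h"
    using step_certificate_bounds[OF cert] by simp
  hence "0 \<le> psi_inner (z (n - 1)) (z n) (z (n + 1)) \<and> psi_inner (z (n - 1)) (z n) (z (n + 1)) \<le> h"
    if "in_box (l1, u1, l2, u2, e) z" for z
    using box[OF that] psi_inner_mono[of "z (n - 1)" u2 "z n" e "z (n + 1)" e]
    by (auto intro!: psi_inner_nonneg)
  hence "\<bar>psi_inner (x (n - 1)) (x n) (x (n + 1)) ^ d - psi_inner (y (n - 1)) (y n) (y (n + 1)) ^ d\<bar>
      \<le> d * h ^ (d - 1) * \<bar>psi_inner (x (n - 1)) (x n) (x (n + 1)) - psi_inner (y (n - 1)) (y n) (y (n + 1))\<bar>"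
    using x y by (meson abs_power_diff_le)
  hence "\<bar>psi d x n - psi d y n\<bar>
      \<le> d * h ^ (d - 1) * \<bar>psi_inner (x (n - 1)) (x n) (x (n + 1)) - psi_inner (y (n - 1)) (y n) (y (n + 1))\<bar>"
    using \<open>3 \<le> n\<close> by (simp add: psi_eq_psi_inner)
  also have "\<dots> \<le> d * h ^ (d - 1) * ((1 + e + e * e) * \<bar>x (n - 1) - y (n - 1)\<bar>
       + u2 * (1 + e + u2 * e) * \<bar>x n - y n\<bar> + u2 * e * \<bar>x (n + 1) - y (n + 1)\<bar>)"
    using box[OF x] box[OF y] \<open>psi_inner u2 e e \<le> h\<close> psi_inner_nonneg[of u2 e e]
      psi_inner_lipschitz[of 0 "x (n - 1)" u2 "y (n - 1)" 0 "x n" e "y n" "x (n + 1)" e "y (n + 1)"]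
    by (auto intro!: mult_left_mono)
  finally show ?thesis .
qed

lemma psi_contracts:
  assumes cert: "contraction_certificate d B q \<rho> \<theta>"
    and x: "in_box B x" and y: "in_box B y" and close: "weighted_dist_le \<rho> x y M"
  shows "weighted_dist_le \<rho> (psi d x) (psi d y) (\<theta> * M)"
proof -
  obtain l1 u1 l2 u2 e where B: "B = (l1, u1, l2, u2, e)"
    by (cases B) auto
  obtain a b c g h where q: "q = (a, b, c, g, h)"
    by (cases q) auto
  note step = cert[unfolded B q contraction_certificate.simps, THEN conjunct1]
  note cert = cert[unfolded B q contraction_certificate.simps, THEN conjunct2]
  note x = x[unfolded B] and y = y[unfolded B]
  have dx: "\<bar>x 1 - y 1\<bar> \<le> M" "\<And>n. 2 \<le> n \<Longrightarrow> \<bar>x n - y n\<bar> \<le> \<rho> * M"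
    using close by (auto simp: weighted_dist_le_def)
  hence "0 \<le> M" by linarith
  have step_nonneg: "0 \<le> l1" "0 \<le> l2" "l2 \<le> 1" "0 \<le> u1" "0 \<le> u2" "0 \<le> e" "0 \<le> b" "0 \<le> g" "0 \<le> h"
    using step x step_certificate_bounds[OF step] psi_head_pos[of l1 u2] psi_inner_nonneg[of u1 u2 e]
      psi_inner_nonneg[of u2 e e] by auto
  have "\<bar>psi d x 1 - psi d y 1\<bar>
      \<le> d * b ^ (d - 1) * ((1 - l2) / (1 + 2 * l1)^2 * M + u1 / (1 + 2 * l1) * (\<rho> * M))"
    using psi_one_lipschitz[OF step x y] dx step_nonneg
    by (elim order.trans, intro mult_left_mono add_mono) auto
  also have "\<dots> = d * b ^ (d - 1) * ((1 - l2) / (1 + 2 * l1)^2 + u1 / (1 + 2 * l1) * \<rho>) * M"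
    by (simp add: algebra_simps)
  also have "\<dots> \<le> \<theta> * M"
    using cert \<open>0 \<le> M\<close> by (intro mult_right_mono) auto
  finally have first: "\<bar>psi d x 1 - psi d y 1\<bar> \<le> \<theta> * M" .
  have "\<bar>psi d x 2 - psi d y 2\<bar>
      \<le> d * g ^ (d - 1) * ((1 + u2 + u2 * e) / (1 + l1 + l1 * l2)^2 * M
        + u1 * (1 + e + u1 * e) / (1 + l1 + l1 * l2)^2 * (\<rho> * M)
        + u1 * u2 / (1 + l1 + l1 * l2) * (\<rho> * M))"
    using psi_two_lipschitz[OF step x y] dx step_nonneg
    by (elim order.trans, intro mult_left_mono add_mono) auto
  also have "\<dots> = d * g ^ (d - 1) * ((1 + u2 + u2 * e) / (1 + l1 + l1 * l2)^2
       + (u1 * (1 + e + u1 * e) / (1 + l1 + l1 * l2)^2 + u1 * u2 / (1 + l1 + l1 * l2)) * \<rho>) * M"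
    by (simp add: algebra_simps)
  also have "\<dots> \<le> (\<theta> * \<rho>) * M"
    using cert \<open>0 \<le> M\<close> by (intro mult_right_mono) auto
  finally have second: "\<bar>psi d x 2 - psi d y 2\<bar> \<le> \<rho> * (\<theta> * M)"
    by (simp add: mult_ac)
  have "e \<le> u2"
    using cert by simp
  have tail: "\<bar>psi d x n - psi d y n\<bar> \<le> \<rho> * (\<theta> * M)" if "3 \<le> n" for n
  proof -
    have "\<bar>psi d x n - psi d y n\<bar>
        \<le> d * h ^ (d - 1) * ((1 + e + e * e) * (\<rho> * M) + u2 * (1 + e + u2 * e) * (\<rho> * M)
          + u2 * e * (\<rho> * M))"
      using psi_tail_lipschitz[OF step \<open>e \<le> u2\<close> x y that] dx that step_nonneg
      by (elim order.trans, intro mult_left_mono add_mono) auto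
    also have "\<dots> = d * h ^ (d - 1) * (1 + e + e * e + u2 * (1 + e + u2 * e) + u2 * e) * (\<rho> * M)"
      by (simp add: algebra_simps)
    also have "\<dots> \<le> \<theta> * (\<rho> * M)"
      using cert \<open>0 \<le> M\<close> by (intro mult_right_mono) auto
    finally show ?thesis
      by (simp add: mult_ac)
  qed
  show ?thesis
    unfolding weighted_dist_le_def using first second tail
    by (metis le_antisym not_less_eq_eq numeral_2_eq_2 numeral_3_eq_3)
qed

lemma convergent_if_summable_diffs:
  fixes X :: "nat \<Rightarrow> real"
  assumes "summable (\<lambda>k. X (Suc k) - X k)"
  shows "convergent X"
proof -
  have "convergent (\<lambda>k. X k - X 0)"
    using assms by (simp add: summable_iff_convergent sum_lessThan_telescope)
  thus ?thesis
    using convergent_add_const_iff[of "X 0" "\<lambda>k. X k - X 0"] by simp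
qed

lemma convergent_funpow_shift:
  fixes f :: "(nat \<Rightarrow> real) \<Rightarrow> nat \<Rightarrow> real"
  assumes "convergent (\<lambda>k. (f ^^ k) ((f ^^ J) x) n)"
  shows "convergent (\<lambda>k. (f ^^ k) x n)"
proof -
  have "(f ^^ k) ((f ^^ J) x) = (f ^^ (k + J)) x" for k
    by (simp add: funpow_add)
  thus ?thesis
    using assms convergent_ignore_initial_segment[of "\<lambda>k. (f ^^ k) x n" J] by simp
qed

lemma convergent_orbit_if_contracting:
  fixes f :: "(nat \<Rightarrow> real) \<Rightarrow> nat \<Rightarrow> real"
  assumes invariant: "\<And>y. P y \<Longrightarrow> P (f y)"
    and contracts: "\<And>y z M. P y \<Longrightarrow> P z \<Longrightarrow> weighted_dist_le \<rho> y z M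
                      \<Longrightarrow> weighted_dist_le \<rho> (f y) (f z) (\<theta> * M)"
    and "0 \<le> \<rho>" "0 \<le> \<theta>" "\<theta> < 1" "P x" and start: "weighted_dist_le \<rho> x (f x) M" and "1 \<le> n"
  shows "convergent (\<lambda>k. (f ^^ k) x n)"
proof -
  have orbit: "P ((f ^^ k) x)" for k
    by (induction k) (simp_all add: \<open>P x\<close> invariant)
  have step: "weighted_dist_le \<rho> ((f ^^ k) x) ((f ^^ Suc k) x) (\<theta> ^ k * M)" for k
  proof (induction k)
    case (Suc k)
    then show ?case
      using contracts[OF orbit orbit[of "Suc k"]] by (simp add: mult.assoc)
  qed (simp add: start)
  have bound: "norm ((f ^^ Suc k) x n - (f ^^ k) x n) \<le> (1 + \<rho>) * M * \<theta> ^ k" for k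
  proof -
    have "0 \<le> \<theta> ^ k * M"
      using step[of k] by (auto simp: weighted_dist_le_def)
    hence "0 \<le> \<rho> * (\<theta> ^ k * M)"
      using \<open>0 \<le> \<rho>\<close> by simp
    moreover have "(1 + \<rho>) * M * \<theta> ^ k = \<theta> ^ k * M + \<rho> * (\<theta> ^ k * M)"
      by (simp add: algebra_simps)
    moreover have "\<bar>(f ^^ k) x n - (f ^^ Suc k) x n\<bar> \<le> \<theta> ^ k * M \<or>
        \<bar>(f ^^ k) x n - (f ^^ Suc k) x n\<bar> \<le> \<rho> * (\<theta> ^ k * M)"
      using step[of k] \<open>1 \<le> n\<close> by (cases "n = 1") (auto simp: weighted_dist_le_def)
    ultimately show ?thesis
      using \<open>0 \<le> \<theta> ^ k * M\<close> by (auto simp: abs_minus_commute)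
  qed
  have "summable (\<lambda>k. (1 + \<rho>) * M * \<theta> ^ k)"
    using \<open>0 \<le> \<theta>\<close> \<open>\<theta> < 1\<close> by (intro summable_mult summable_geometric) auto
  hence "summable (\<lambda>k. (f ^^ Suc k) x n - (f ^^ k) x n)"
    using bound by (rule summable_comparison_test')
  thus ?thesis
    by (rule convergent_if_summable_diffs)
qed

lemma weighted_dist_le_in_box:
  assumes "step_certificate d B q B'" "in_box B x" "in_box B y" "0 < \<rho>"
  shows "weighted_dist_le \<rho> x y (max 1 (1 / \<rho>))"
proof -
  obtain l1 u1 l2 u2 e where B: "B = (l1, u1, l2, u2, e)"
    by (cases B) auto
  obtain a b c g h where q: "q = (a, b, c, g, h)"
    by (cases q) auto
  obtain l1' u1' l2' u2' e' where B': "B' = (l1', u1', l2', u2', e')"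
    by (cases B') auto
  have unit: "0 \<le> z n \<and> z n \<le> 1" if "in_box B z" "1 \<le> n" for z n
  proof -
    consider "n = 1" | "n = 2" | "3 \<le> n"
      using \<open>1 \<le> n\<close> by linarith
    thus ?thesis
      using assms(1) that unfolding B q B' by cases auto
  qed
  have "\<bar>x n - y n\<bar> \<le> 1" if "1 \<le> n" for n
    using unit[OF assms(2) that] unit[OF assms(3) that] by (simp add: abs_le_iff)
  moreover have "1 \<le> \<rho> * max 1 (1 / \<rho>)"
    using \<open>0 < \<rho>\<close> by (simp add: max_def field_simps)
  ultimately show ?thesis
    unfolding weighted_dist_le_def by (meson le_max_iff_disj one_le_numeral order.trans order_refl)
qed

lemma convergent_psi_orbit_in_contracting_box:
  assumes cert: "contraction_certificate d B q \<rho> \<theta>" and "in_box B x" "1 \<le> n"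
  shows "convergent (\<lambda>k. (psi d ^^ k) x n)"
proof -
  obtain l1 u1 l2 u2 e a b c g h where B: "B = (l1, u1, l2, u2, e)" and q: "q = (a, b, c, g, h)"
    by (cases B, cases q) auto
  have invariant: "step_certificate d B q B" and "0 < \<rho>" "0 \<le> \<theta>" "\<theta> < 1"
    using cert unfolding B q by auto
  show ?thesis
  proof (rule convergent_orbit_if_contracting[where P = "in_box B"])
    show "weighted_dist_le \<rho> x (psi d x) (max 1 (1 / \<rho>))"
      by (rule weighted_dist_le_in_box[OF invariant \<open>in_box B x\<close> psi_in_box[OF invariant \<open>in_box B x\<close>]
            \<open>0 < \<rho>\<close>])
  qed (use psi_in_box[OF invariant] psi_contracts[OF cert] assms \<open>0 < \<rho>\<close> \<open>0 \<le> \<theta>\<close> \<open>\<theta> < 1\<close> in auto)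
qed

fun certified_path :: "nat \<Rightarrow> box \<Rightarrow> (witness \<times> box) list \<Rightarrow> box \<Rightarrow> bool" where
  "certified_path d B [] B' \<longleftrightarrow> B' = B"
| "certified_path d B ((q, C) # steps) B' \<longleftrightarrow> step_certificate d B q C \<and> certified_path d C steps B'"

lemma in_box_funpow_if_certified_path:
  "certified_path d B steps B' \<Longrightarrow> in_box B x \<Longrightarrow> in_box B' ((psi d ^^ length steps) x)"
proof (induction steps arbitrary: B x)
  case (Cons s steps)
  obtain q C where "s = (q, C)"
    by (cases s)
  hence "step_certificate d B q C" and "certified_path d C steps B'"
    using Cons.prems(1) by simp_all
  hence "in_box B' ((psi d ^^ length steps) (psi d x))"
    using Cons.IH psi_in_box Cons.prems(2) by blast
  thus ?case
    by (simp add: funpow_Suc_right del: funpow.simps)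
qed simp

definition reaches_contracting_box :: "nat \<Rightarrow> box \<Rightarrow> bool" where
  "reaches_contracting_box d B \<longleftrightarrow> (\<exists>J B' q \<rho> \<theta>. contraction_certificate d B' q \<rho> \<theta> \<and>
     (\<forall>x. in_box B x \<longrightarrow> in_box B' ((psi d ^^ J) x)))"

lemma reaches_contracting_box_if_contracting:
  "contraction_certificate d B q \<rho> \<theta> \<Longrightarrow> reaches_contracting_box d B"
  unfolding reaches_contracting_box_def by (metis funpow_0)

lemma reaches_contracting_box_step:
  assumes "certified_path d B steps C" "reaches_contracting_box d C"
  shows "reaches_contracting_box d B"
proof -
  obtain J B' q \<rho> \<theta> where "contraction_certificate d B' q \<rho> \<theta>"
    and reach: "\<And>x. in_box C x \<Longrightarrow> in_box B' ((psi d ^^ J) x)"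
    using assms(2) unfolding reaches_contracting_box_def by blast
  moreover have "in_box B' ((psi d ^^ (J + length steps)) x)" if "in_box B x" for x
    using reach[OF in_box_funpow_if_certified_path[OF assms(1) that]] by (simp add: funpow_add)
  ultimately show ?thesis
    unfolding reaches_contracting_box_def by blast
qed

lemma convergent_psi_orbit_if_reaches_contracting_box:
  assumes "reaches_contracting_box d B" "in_box B x" "1 \<le> n"
  shows "convergent (\<lambda>k. (psi d ^^ k) x n)"
proof -
  obtain J B' q \<rho> \<theta> where "contraction_certificate d B' q \<rho> \<theta>"
    and "in_box B' ((psi d ^^ J) x)"
    using assms(1,2) unfolding reaches_contracting_box_def by blast
  hence "convergent (\<lambda>k. (psi d ^^ k) ((psi d ^^ J) x) n)"
    using convergent_psi_orbit_in_contracting_box \<open>1 \<le> n\<close> by blast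
  thus ?thesis
    by (rule convergent_funpow_shift)
qed

section \<open>Certificates for \<open>2 \<le> d \<le> 7\<close>\<close>

(* The boxes were obtained by iterating psi d on boxes with outward rounding to simple rationals,
   the witnesses as simplest rationals satisfying the required bounds; the proofs below only
   check them. Long paths are split into pieces of ten steps to keep each proof short. *)

lemma certified_path_2:
  "certified_path 2 (0, 1, 0, 9/10, 9/10)
    [((2/3, 1, 0, 29/31, 9/10), (4/9, 1, 0, 43/49, 30/37)),
     ((2/3, 34/35, 4/13, 9/10, 26/31), (4/9, 17/18, 7/74, 30/37, 19/27)),
     ((19/27, 22/23, 16/49, 44/53, 3/4), (40/81, 11/12, 5/47, 20/29, 9/16)),
     ((22/31, 12/13, 6/17, 68/91, 5/8), (70/139, 29/34, 20/161, 14/25, 9/23)),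
     ((13/18, 33/37, 13/36, 15/23, 18/37), (25/48, 39/49, 16/123, 20/47, 9/38)),
     ((19/26, 35/41, 10/27, 37/65, 13/36), (8/15, 19/26, 10/73, 12/37, 3/23))]
    (8/15, 19/26, 10/73, 12/37, 3/23)"
  by (simp add: power_divide)

lemma contraction_certificate_2:
  "contraction_certificate 2 (8/15, 19/26, 10/73, 12/37, 3/23)
    (23/31, 19/23, 20/53, 29/57, 3/11) (29/26) (102/103)"
  by (simp add: power_divide)

lemma certified_path_3:
  "certified_path 3 (0, 1, 0, 9/10, 9/10)
    [((2/3, 1, 0, 15/16, 9/10), (5/17, 1, 0, 19/23, 11/15)),
     ((2/3, 31/32, 5/22, 13/15, 7/9), (5/17, 11/12, 1/86, 15/23, 8/17)),
     ((17/25, 15/16, 5/22, 5/7, 13/23), (5/16, 19/23, 1/86, 11/30, 2/11)),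
     ((11/16, 15/17, 5/21, 14/25, 5/16), (10/31, 9/13, 2/149, 3/17, 2/65)),
     ((17/24, 11/13, 11/45, 5/11, 7/45), (6/17, 11/18, 1/69, 5/53, 1/264))]
    (6/17, 11/18, 1/69, 5/53, 1/264)"
  by (simp add: power_divide)

lemma contraction_certificate_3:
  "contraction_certificate 3 (6/17, 11/18, 1/69, 5/53, 1/264)
    (8/11, 9/11, 5/19, 17/42, 2/23) (3/8) (30/31)"
  by (simp add: power_divide)

lemma certified_path_4:
  "certified_path 4 (0, 1, 0, 9/10, 9/10)
    [((2/3, 1, 0, 29/31, 9/10), (13/66, 1, 0, 23/30, 21/32)),
     ((2/3, 30/31, 11/67, 23/28, 12/17), (13/66, 29/33, 1/1377, 21/46, 36/145)),
     ((17/25, 25/27, 11/67, 20/33, 8/21), (16/75, 14/19, 1/1377, 5/37, 5/237)),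
     ((33/47, 27/31, 10/57, 16/35, 9/74), (8/33, 15/26, 1/1056, 6/137, 1/1000)),
     ((19/26, 11/13, 8/41, 26/69, 4/95), (31/109, 19/37, 1/690, 2/99, 1/1000))]
    (31/109, 19/37, 1/690, 2/99, 1/1000)"
  by (simp add: power_divide)

lemma contraction_certificate_4:
  "contraction_certificate 4 (31/109, 19/37, 1/690, 2/99, 1/1000)
    (38/51, 14/17, 21/95, 21/61, 3/151) (1/9) (98/99)"
  by (simp add: power_divide)

lemma certified_path_5:
  "certified_path 5 (0, 1, 0, 9/10, 9/10)
    [((2/3, 1, 0, 29/31, 9/10), (5/38, 1, 0, 28/39, 13/22)),
     ((2/3, 34/35, 5/43, 15/19, 28/43), (5/38, 13/15, 1/47043, 27/88, 13/111)),
     ((15/22, 13/14, 5/43, 29/53, 15/58), (5/34, 9/13, 1/47043, 3/61, 1/862)),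
     ((17/24, 25/28, 5/39, 8/19, 4/85), (13/73, 21/37, 1/28872, 2/151, 1/1000)),
     ((11/15, 27/31, 8/53, 15/41, 3/229), (11/52, 93/185, 1/12763, 2/305, 1/1000)),
     ((65/87, 29/34, 11/63, 31/92, 1/153), (10/43, 14/31, 1/6163, 1/230, 1/1000)),
     ((16/21, 16/19, 10/53, 5/16, 2/461), (10/39, 14/33, 1/4182, 1/335, 1/1000)),
     ((10/13, 5/6, 10/49, 20/67, 1/335), (7/26, 27/67, 1/2825, 1/421, 1/1000))]
    (7/26, 27/67, 1/2825, 1/421, 1/1000)"
  by (simp add: power_divide)

lemma contraction_certificate_5:
  "contraction_certificate 5 (7/26, 27/67, 1/2825, 1/421, 1/1000)
    (31/40, 19/23, 7/33, 15/52, 1/421) (1/45) (437/438)"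
  by (simp add: power_divide)

lemma certified_path_6_1:
  "certified_path 6 (0, 1, 0, 9/10, 9/10)
    [((2/3, 1, 0, 214/229, 9/10), (64/729, 1, 0, 331/497, 169/318)),
     ((2/3, 313/321, 64/793, 222/293, 186/311), (64/729, 104/121, 1/3618756, 410/2167, 47/1027)),
     ((106/155, 357/380, 64/793, 139/273, 143/864), (58/567, 570/829, 1/3618756, 43/2468, 1/10000)),
     ((562/791, 725/791, 58/625, 163/396, 18/1051), (146/1135, 150/253, 1/1565713, 23/4729, 1/10000)),
     ((180/247, 150/167, 31/272, 255/683, 12/2479), (34/227, 115/219, 1/456293, 14/5169, 1/10000)),
     ((212/285, 439/496, 34/261, 119/345, 6/2221), (72/425, 212/441, 1/204631, 9/5344, 1/10000)),
     ((77/102, 83/95, 72/497, 248/763, 7/4163), (119/643, 153/344, 1/108180, 13/11025, 1/10000)),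
     ((406/531, 295/341, 119/762, 175/568, 30/25469), (192/961, 83/198, 1/68937, 8/9353, 1/10000)),
     ((281/364, 487/568, 189/1135, 133/450, 1/1170), (109/515, 292/735, 1/46904, 4/6001, 1/10000)),
     ((313/402, 212/249, 109/624, 130/457, 11/16512), (174/781, 403/1058, 1/35201, 4/7549, 1/10000))]
    (174/781, 403/1058, 1/35201, 4/7549, 1/10000)"
  by (simp add: power_divide)

lemma certified_path_6_2:
  "certified_path 6 (174/781, 403/1058, 1/35201, 4/7549, 1/10000)
    [((29/37, 346/409, 174/955, 109/395, 17/32097), (67/289, 195/532, 1/27336, 4/9059, 1/10000)),
     ((343/435, 218/259, 67/356, 238/887, 2/4531), (143/595, 213/599, 1/22504, 5/13398, 1/10000)),
     ((385/486, 253/302, 56/289, 90/343, 7/18762), (108/437, 261/755, 2/37783, 7/21449, 1/10000)),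
     ((109/137, 207/248, 65/328, 120/467, 4/12259), (87/343, 187/553, 1/16511, 5/17369, 1/10000)),
     ((186/233, 89/107, 52/257, 160/633, 5/17372), (81/313, 51/154, 1/14574, 3/11503, 1/10000)),
     ((205/256, 399/481, 103/501, 160/643, 7/26844), (53/201, 130/399, 3/39731, 2/8425, 1/10000))]
    (53/201, 130/399, 3/39731, 2/8425, 1/10000)"
  by (simp add: power_divide)

lemma contraction_certificate_6:
  "contraction_certificate 6 (53/201, 130/399, 3/39731, 2/8425, 1/10000)
    (293/365, 163/197, 77/369, 73/297, 1/4213) (1/270) (1444/1445)"
  by (simp add: power_divide)

lemma certified_path_7_1:
  "certified_path 7 (0, 1, 0, 9/10, 9/10)
    [((2/3, 1, 0, 271/290, 9/10), (128/2187, 1, 0, 720/1157, 562/1175)),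
     ((2/3, 644/657, 128/2315, 667/911, 1064/1923), (128/2187, 646/743, 1/632975908, 247/2190, 89/5606)),
     ((716/1049, 759/796, 128/2315, 2573/5224, 244/2373), (227/3289, 478/667, 1/632975908, 14/1991, 1/1000000)),
     ((1145/1623, 515/548, 182/2819, 223/532, 131/18761), (179/2058, 314/485, 1/213877853, 24/10555, 1/1000000)),
     ((799/1113, 664/717, 179/2237, 353/897, 43/18954), (355/3613, 347/594, 1/47609177, 19/12998, 1/1000000)),
     ((621/850, 515/561, 231/2582, 805/2181, 29/19868), (964/8677, 817/1487, 1/21797657, 16/17145, 1/1000000)),
     ((815/1104, 861/947, 938/9381, 468/1319, 25/26814), (363/3038, 550/1071, 1/10007466, 39/55088, 1/1000000)),
     ((1229/1646, 722/799, 214/2005, 462/1361, 45/63608), (85/657, 551/1120, 1/6337300, 11/21179, 1/1000000)),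
     ((743/988, 428/477, 85/742, 348/1055, 14/26969), (293/2154, 966/2063, 1/3862735, 31/72958, 1/1000000)),
     ((185/244, 376/421, 293/2447, 438/1373, 21/49444), (157/1090, 606/1337, 1/2833769, 13/38665, 1/1000000))]
    (157/1090, 606/1337, 1/2833769, 13/38665, 1/1000000)"
  by (simp add: power_divide)

lemma certified_path_7_2:
  "certified_path 7 (157/1090, 606/1337, 1/2833769, 13/38665, 1/1000000)
    [((513/673, 1025/1154, 157/1247, 326/1045, 9/26777), (394/2635, 321/736, 1/1994195, 16/55643, 1/1000000)),
     ((596/777, 323/365, 189/1453, 332/1093, 22/76531), (307/1965, 524/1233, 1/1587182, 11/46107, 1/1000000)),
     ((1757/2281, 533/605, 302/2235, 261/875, 13/54503), (297/1846, 166/403, 1/1215890, 8/38077, 1/1000000)),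
     ((545/704, 166/189, 297/2143, 625/2142, 13/61888), (871/5227, 302/749, 1/1018264, 13/72197, 1/1000000)),
     ((1051/1353, 2542/2905, 860/6021, 763/2655, 5/27773), (235/1377, 548/1395, 1/824502, 31/191488, 1/1000000)),
     ((1904/2441, 789/904, 235/1612, 365/1294, 39/240943), (322/1833, 326/845, 1/714629, 14/98541, 1/1000000)),
     ((449/574, 743/854, 309/2068, 431/1548, 8/56317), (305/1702, 223/591, 1/601374, 40/308401, 1/1000000)),
     ((814/1037, 283/326, 305/2007, 397/1449, 1/7711), (139/757, 347/934, 1/534236, 13/112173, 1/1000000)),
     ((838/1065, 851/983, 139/896, 392/1447, 3/25889), (389/2083, 859/2357, 1/462437, 2/18677, 1/1000000)),
     ((1067/1352, 286/331, 358/2275, 39/146, 15/140092), (438/2297, 649/1805, 1/418494, 11/113347, 1/1000000))]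
    (438/2297, 649/1805, 1/418494, 11/113347, 1/1000000)"
  by (simp add: power_divide)

lemma certified_path_7_3:
  "certified_path 7 (438/2297, 649/1805, 1/418494, 11/113347, 1/1000000)
    [((1365/1726, 637/739, 438/2735, 388/1467, 4/41221), (95/491, 134/379, 1/370155, 7/77319, 1/1000000)),
     ((513/647, 839/975, 95/586, 477/1826, 9/99419), (501/2543, 283/810, 1/339796, 11/132516, 1/1000000)),
     ((981/1235, 1033/1203, 356/2163, 297/1147, 8/96383), (256/1283, 769/2234, 1/305665, 11/140942, 1/1000000)),
     ((617/775, 487/568, 256/1539, 578/2257, 8/102511), (239/1179, 343/1007, 1/283786, 6/83057, 1/1000000)),
     ((736/923, 1163/1359, 239/1418, 202/795, 5/69219), (304/1483, 399/1187, 1/258791, 9/131629, 1/1000000)),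
     ((1109/1388, 194/227, 419/2463, 277/1101, 5/73132), (206/991, 324/973, 1/242523, 1/15673, 1/1000000)),
     ((1289/1611, 831/974, 375/2179, 346/1385, 16/250783), (549/2615, 541/1644, 1/223657, 1/16467, 1/1000000)),
     ((416/519, 317/372, 625/3602, 233/941, 16/263487), (1161/5462, 201/616, 1/211177, 10/175241, 1/1000000)),
     ((817/1018, 793/932, 44/251, 1225/4979, 13/227826), (95/443, 657/2035, 1/196584, 8/146599, 1/1000000)),
     ((631/785, 606/713, 472/2673, 689/2823, 6/109955), (889/4100, 685/2138, 2/373619, 8/155071, 1/1000000))]
    (889/4100, 685/2138, 2/373619, 8/155071, 1/1000000)"
  by (simp add: power_divide)

lemma certified_path_7_4:
  "certified_path 7 (889/4100, 685/2138, 2/373619, 8/155071, 1/1000000)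
    [((1599/1987, 999/1177, 420/2357, 281/1158, 5/96924), (172/787, 291/917, 2/350593, 3/60553, 1/1000000)),
     ((851/1056, 697/822, 311/1734, 192/797, 7/141297), (509/2306, 341/1082, 2/335005, 7/148661, 1/1000000)),
     ((989/1226, 448/529, 115/636, 457/1907, 4/84953), (315/1417, 583/1866, 3/474719, 3/66094, 1/1000000)),
     ((1172/1451, 2128/2515, 311/1710, 374/1571, 4/88129), (565/2519, 548/1765, 2/303865, 7/161521, 1/1000000)),
     ((325/402, 595/704, 709/3870, 213/899, 5/115377), (207/917, 203/659, 2/288725, 5/119297, 1/1000000)),
     ((862/1065, 467/553, 314/1705, 1044/4433, 3/71581), (961/4223, 287/937, 1/139176, 5/124437, 1/1000000)),
     ((934/1153, 205/243, 885/4774, 733/3126, 3/74665), (393/1717, 281/924, 3/398746, 3/76969, 1/1000000)),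
     ((476/587, 349/414, 103/553, 833/3572, 4/102629), (421/1826, 537/1775, 2/257185, 4/106641, 1/1000000)),
     ((719/886, 838/995, 424/2263, 796/3427, 5/133306), (337/1454, 263/875, 3/370129, 6/164497, 1/1000000)),
     ((913/1124, 287/341, 124/659, 361/1562, 8/219337), (311/1333, 318/1063, 1/119742, 3/85180, 1/1000000))]
    (311/1333, 318/1063, 1/119742, 3/85180, 1/1000000)"
  by (simp add: power_divide)

lemma certified_path_7_5:
  "certified_path 7 (311/1333, 318/1063, 1/119742, 3/85180, 1/1000000)
    [((1229/1512, 978/1163, 332/1755, 394/1711, 4/113577), (380/1621, 284/955, 2/230677, 3/87377, 1/1000000)),
     ((842/1035, 574/683, 222/1169, 251/1095, 5/145633), (620/2629, 448/1513, 2/224523, 3/90220, 1/1000000)),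
     ((731/898, 697/830, 412/2159, 236/1033, 4/120297), (410/1731, 91/309, 3/325544, 2/61567, 1/1000000)),
     ((400/491, 47/56, 365/1906, 488/2145, 5/153922), (211/886, 687/2342, 3/317638, 5/158497, 1/1000000)),
     ((2350/2883, 1383/1649, 407/2116, 247/1089, 3/95101), (389/1627, 223/764, 2/205343, 8/259063, 1/1000000)),
     ((748/917, 482/575, 137/710, 533/2359, 4/129535), (507/2110, 308/1059, 3/301222, 3/99799, 1/1000000)),
     ((324/397, 733/875, 235/1213, 89/395, 4/133069), (143/593, 544/1879, 3/292868, 2/67839, 1/1000000)),
     ((824/1009, 175/209, 252/1297, 445/1982, 5/169602), (203/838, 376/1303, 3/287011, 1/34770, 1/1000000)),
     ((969/1186, 959/1146, 164/841, 346/1545, 8/278167), (637/2621, 273/950, 2/186507, 1/35397, 1/1000000)),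
     ((1111/1359, 757/905, 419/2143, 321/1438, 8/283183), (389/1594, 259/904, 4/366199, 3/108617, 1/1000000))]
    (389/1594, 259/904, 4/366199, 3/108617, 1/1000000)"
  by (simp add: power_divide)

lemma certified_path_7_6:
  "certified_path 7 (389/1594, 259/904, 4/366199, 3/108617, 1/1000000)
    [((467/571, 729/872, 256/1305, 359/1612, 5/181033), (281/1148, 546/1913, 1/89453, 6/220823, 1/1000000)),
     ((608/743, 1129/1351, 82/417, 421/1896, 4/147219), (357/1453, 261/917, 1/87954, 2/75149, 1/1000000)),
     ((1178/1439, 938/1123, 643/3260, 263/1187, 5/187877), (662/2687, 78/275, 3/258326, 3/114442, 1/1000000)),
     ((353/431, 941/1127, 1036/5241, 137/620, 4/152593), (200/809, 159/562, 4/339189, 5/194387, 1/1000000)),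
     ((458/559, 782/937, 556/2805, 1029/4666, 3/116635), (201/811, 196/695, 3/249533, 8/315351, 1/1000000)),
     ((791/965, 1007/1207, 115/579, 251/1141, 4/157679), (497/1999, 83/295, 4/328039, 4/160451, 1/1000000)),
     ((378/461, 899/1078, 498/2501, 388/1767, 3/120341), (386/1549, 503/1793, 3/241720, 3/121886, 1/1000000)),
     ((671/818, 381/457, 542/2717, 62/283, 5/203148), (693/2773, 180/643, 3/238646, 5/206411, 1/1000000)),
     ((759/925, 2981/3577, 711/3556, 409/1870, 7/288982), (143/571, 373/1336, 1/78279, 2/83533, 1/1000000)),
     ((252/307, 729/875, 142/709, 251/1150, 3/125302), (402/1601, 433/1554, 5/386791, 3/127142, 1/1000000))]
    (402/1601, 433/1554, 5/386791, 3/127142, 1/1000000)"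
  by (simp add: power_divide)

lemma certified_path_7_7:
  "certified_path 7 (402/1601, 433/1554, 5/386791, 3/127142, 1/1000000)
    [((748/911, 289/347, 401/1998, 501/2299, 2/84763), (278/1105, 343/1234, 3/228707, 4/171383, 1/1000000)),
     ((400/487, 199/239, 436/2169, 579/2662, 3/128540), (231/916, 283/1020, 1/75407, 5/217108, 1/1000000)),
     ((861/1048, 144/173, 173/859, 917/4222, 2/86845), (863/3416, 325/1174, 4/297639, 3/131572, 1/1000000)),
     ((821/999, 1195/1436, 431/2137, 655/3021, 4/175433), (139/549, 448/1621, 5/368351, 4/177593, 1/1000000)),
     ((605/736, 1183/1422, 496/2455, 461/2129, 5/221996), (335/1321, 473/1715, 4/291105, 5/224023, 1/1000000)),
     ((680/827, 875/1052, 229/1132, 179/828, 2/89611), (170/669, 301/1093, 2/144247, 5/226574, 1/1000000)),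
     ((741/901, 153/184, 139/686, 122/565, 3/135947), (1051/4130, 351/1277, 2/142625, 5/228449, 1/1000000)),
     ((923/1122, 912/1097, 369/1819, 105/487, 3/137072), (193/757, 213/776, 3/212210, 4/184687, 1/1000000)),
     ((859/1044, 571/687, 733/3608, 283/1314, 3/138518), (265/1038, 488/1781, 2/140013, 3/139567, 1/1000000)),
     ((637/774, 831/1000, 313/1539, 408/1897, 4/186093), (223/872, 775/2832, 5/347401, 5/234866, 1/1000000))]
    (223/872, 775/2832, 5/347401, 5/234866, 1/1000000)"
  by (simp add: power_divide)

lemma certified_path_7_8:
  "certified_path 7 (223/872, 775/2832, 5/347401, 5/234866, 1/1000000)
    [((498/605, 329/396, 847/4159, 292/1359, 7/328819), (180/703, 356/1303, 5/344119, 3/141898, 1/1000000)),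
     ((480/583, 937/1128, 127/623, 603/2810, 4/189201), (308/1201, 277/1015, 3/205075, 5/238612, 1/1000000)),
     ((653/793, 975/1174, 288/1411, 134/625, 3/143170), (410/1597, 106/389, 4/271021, 5/240102, 1/1000000)),
     ((976/1185, 935/1126, 467/2286, 109/509, 3/144064), (226/879, 242/889, 3/202040, 2/96843, 1/1000000))]
    (226/879, 242/889, 3/202040, 2/96843, 1/1000000)"
  by (simp add: power_divide)

lemma contraction_certificate_7:
  "contraction_certificate 7 (226/879, 242/889, 3/202040, 2/96843, 1/1000000)
    (673/817, 797/960, 253/1237, 49/229, 3/145267) (1/1809) (7041/7042)"
  by (simp add: power_divide)

lemma reaches_contracting_box_2: "reaches_contracting_box 2 (0, 1, 0, 9/10, 9/10)"
  by (intro reaches_contracting_box_step[OF certified_path_2]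
      reaches_contracting_box_if_contracting[OF contraction_certificate_2])

lemma reaches_contracting_box_3: "reaches_contracting_box 3 (0, 1, 0, 9/10, 9/10)"
  by (intro reaches_contracting_box_step[OF certified_path_3]
      reaches_contracting_box_if_contracting[OF contraction_certificate_3])

lemma reaches_contracting_box_4: "reaches_contracting_box 4 (0, 1, 0, 9/10, 9/10)"
  by (intro reaches_contracting_box_step[OF certified_path_4]
      reaches_contracting_box_if_contracting[OF contraction_certificate_4])

lemma reaches_contracting_box_5: "reaches_contracting_box 5 (0, 1, 0, 9/10, 9/10)"
  by (intro reaches_contracting_box_step[OF certified_path_5]
      reaches_contracting_box_if_contracting[OF contraction_certificate_5])

lemma reaches_contracting_box_6: "reaches_contracting_box 6 (0, 1, 0, 9/10, 9/10)"
  by (intro reaches_contracting_box_step[OF certified_path_6_1]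
      reaches_contracting_box_step[OF certified_path_6_2]
      reaches_contracting_box_if_contracting[OF contraction_certificate_6])

lemma reaches_contracting_box_7: "reaches_contracting_box 7 (0, 1, 0, 9/10, 9/10)"
  by (intro reaches_contracting_box_step[OF certified_path_7_1]
      reaches_contracting_box_step[OF certified_path_7_2]
      reaches_contracting_box_step[OF certified_path_7_3]
      reaches_contracting_box_step[OF certified_path_7_4]
      reaches_contracting_box_step[OF certified_path_7_5]
      reaches_contracting_box_step[OF certified_path_7_6]
      reaches_contracting_box_step[OF certified_path_7_7]
      reaches_contracting_box_step[OF certified_path_7_8]
      reaches_contracting_box_if_contracting[OF contraction_certificate_7])

lemma in_box_if_tail_bounded: "tail_bounded 2 (9/10) x \<Longrightarrow> in_box (0, 1, 0, 9/10, 9/10) x"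
  by (simp add: tail_bounded_def)

lemma convergent_psi_orbit:
  assumes "2 \<le> d" "d \<le> 7" "tail_bounded 2 (9/10) x" "1 \<le> n"
  shows "convergent (\<lambda>k. (psi d ^^ k) x n)"
proof -
  consider "d = 2" | "d = 3" | "d = 4" | "d = 5" | "d = 6" | "d = 7"
    using assms(1,2) by linarith
  hence "reaches_contracting_box d (0, 1, 0, 9/10, 9/10)"
    by cases (use reaches_contracting_box_2 reaches_contracting_box_3 reaches_contracting_box_4
        reaches_contracting_box_5 reaches_contracting_box_6 reaches_contracting_box_7 in simp_all)
  thus ?thesis
    using convergent_psi_orbit_if_reaches_contracting_box in_box_if_tail_bounded[OF assms(3)] assms(4)
    by blast
qed

theorem proposition2p7:
  fixes d :: nat and w :: "int \<Rightarrow> real"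
  assumes "2 \<le> d" and "d \<le> 7"
    and "good w" and "(w has_sum 1) UNIV"
  shows "(\<exists>c. 0 < c \<and> c < 1 \<and>
           (\<forall>\<^sub>F k in sequentially. ((psi d) ^^ k) (Rmap w) \<in> Sset 0 1 c)) \<and>
         (\<forall>n\<ge>1. convergent (\<lambda>k. ((psi d) ^^ k) (Rmap w) n))"
proof -
  obtain N t where "2 \<le> N" "t < 1" and tail: "tail_bounded N t (Rmap w)"
    using Rmap_good(2)[OF \<open>good w\<close>] by blast
  then obtain K where K: "\<And>k. K \<le> k \<Longrightarrow> tail_bounded 2 (9/10) ((psi d ^^ k) (Rmap w))"
    using psi_orbit_eventually_tail_bounded[OF \<open>2 \<le> d\<close>] by blast
  have "zeros_persist ((psi d ^^ k) (Rmap w))" for k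
    using psi_orbit_zeros_persist(1) Rmap_good(1)[OF \<open>good w\<close>] tail unfolding tail_bounded_def by blast
  moreover have "(psi d ^^ k) (Rmap w) 0 = 0" for k
    by (cases k) (simp_all add: Rmap_def)
  ultimately have "\<forall>\<^sub>F k in sequentially. (psi d ^^ k) (Rmap w) \<in> Sset 0 1 (9/10)"
    using K mem_Sset_if_tail_bounded[of "(psi d ^^ _) (Rmap w)" "9/10"]
    by (intro eventually_sequentiallyI[of K]) simp
  moreover have "convergent (\<lambda>k. (psi d ^^ k) (Rmap w) n)" if "1 \<le> n" for n
    using convergent_psi_orbit[OF assms(1,2) K[OF order.refl] that] by (rule convergent_funpow_shift)
  ultimately show ?thesis
    by (intro conjI exI[of _ "9/10"]) simp_all
qed

end
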